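(* Let $A$ be a ring and $I\subset A$ an ideal such that $A_{I\text{-tor}}\cap I=(0)$. Then $A$ is $I$-adically separated (resp. $I$-adically complete) if and only if $A/A_{I\text{-tor}}$ is $I$-adically separated (resp. $I$-adically complete).
   Context: Rings are commutative with $1$. $A_{I\text{-tor}}$ is the ideal of $x\in A$ such that for every $a\in I$ there is $n>0$ with $a^nx=0$. "$I$-adically complete" means Hausdorff complete for the $I$-adic topology. *)

theory Defs
  imports "HOL-Algebra.Algebra"
begin

primrec ideal_pow :: "('a, 'b) ring_scheme \<Rightarrow> 'a set \<Rightarrow> nat \<Rightarrow> 'a set" where
  "ideal_pow R I 0 = carrier R"
| "ideal_pow R I (Suc n) = ideal_prod R I (ideal_pow R I n)"

definition tor :: "('a, 'b) ring_scheme \<Rightarrow> 'a set \<Rightarrow> 'a set" where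
  "tor R I = {x \<in> carrier R. \<forall>a\<in>I. \<exists>n::nat. n > 0 \<and> a [^]\<^bsub>R\<^esub> n \<otimes>\<^bsub>R\<^esub> x = \<zero>\<^bsub>R\<^esub>}"

definition adic_separated :: "('a, 'b) ring_scheme \<Rightarrow> 'a set \<Rightarrow> bool" where
  "adic_separated R I \<longleftrightarrow> (\<Inter>n. ideal_pow R I n) = {\<zero>\<^bsub>R\<^esub>}"

text \<open>I-adically (Hausdorff) complete: the canonical map R \<rightarrow> lim R/I^n is bijective.
  Injectivity is separatedness; surjectivity says every compatible family of cosets
  c_n \<in> R/I^n (c_(n+1) maps to c_n, i.e. c_(n+1) \<subseteq> c_n) comes from an element.\<close>
definition adic_complete :: "('a, 'b) ring_scheme \<Rightarrow> 'a set \<Rightarrow> bool" where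
  "adic_complete R I \<longleftrightarrow> adic_separated R I \<and>
     (\<forall>c::nat \<Rightarrow> 'a set.
        (\<forall>n. c n \<in> a_rcosets\<^bsub>R\<^esub> (ideal_pow R I n)) \<and> (\<forall>n. c (Suc n) \<subseteq> c n)
        \<longrightarrow> (\<exists>x\<in>carrier R. \<forall>n. c n = ideal_pow R I n +>\<^bsub>R\<^esub> x))"

definition quot_ideal :: "('a, 'b) ring_scheme \<Rightarrow> 'a set \<Rightarrow> 'a set \<Rightarrow> 'a set set" where
  "quot_ideal R J I = (\<lambda>a. J +>\<^bsub>R\<^esub> a) ` I"

end

theory Submission
  imports Defs
begin

(* Write T for the I-torsion ideal and J n for the n-th power of I. Since T \<inter> I = 0, the
  ideal I annihilates T, and T meets J 1 = I trivially.

  Separatedness: A/T is separated iff the intersection of the J n + T is T. If the J n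
  intersect to 0 and y lies in every J n + T, then a y lies in every J n for a \<in> I (as a T = 0),
  so a y = 0 and y \<in> T. Conversely an element of every J n lies in T \<inter> I = 0.

  Completeness: modulo separatedness, both sides say that every sequence whose increments
  x (n+1) - x n lie in the n-th member of a filtration has a limit, for the filtration J n on A
  and J n + T (the preimage of the filtration of A/T) respectively. Correcting a sequence by the
  T-components of its increments turns a (J + T)-Cauchy sequence into a J-Cauchy one, whose
  J-limit is then a (J + T)-limit. Conversely, if y is a (J + T)-limit of a J-Cauchy sequence,
  the T-components of y - x n are constant from n = 1 on, because they differ by elements of
  T \<inter> J 1 = 0; subtracting that constant from y gives a J-limit. *)

no_notation Sum_Type.Plus (infixr \<open><+>\<close> 65)

section \<open>Powers of an ideal\<close>

lemma (in ring) ideal_pow_ideal: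
  assumes "ideal I R"
  shows "ideal (ideal_pow R I n) R"
  by (induction n) (simp_all add: oneideal ideal_prod_is_ideal assms)

lemma (in ring) ideal_pow_subset_carrier:
  assumes "ideal I R"
  shows "ideal_pow R I n \<subseteq> carrier R"
  using ideal.Icarr[OF ideal_pow_ideal[OF assms]] by blast

lemma (in ring) ideal_pow_zero_closed:
  assumes "ideal I R"
  shows "\<zero> \<in> ideal_pow R I n"
  using additive_subgroup.zero_closed[OF ideal.axioms(1)[OF ideal_pow_ideal[OF assms]]] .

lemma (in ring) ideal_pow_Suc_subset:
  assumes "ideal I R"
  shows "ideal_pow R I (Suc n) \<subseteq> ideal_pow R I n"
  using ideal_prod_inter[OF assms ideal_pow_ideal[OF assms]] by simp

lemma (in ring) ideal_pow_antimono:
  assumes "ideal I R"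
  shows "antimono (ideal_pow R I)"
  using ideal_pow_Suc_subset[OF assms] by (simp add: antimono_iff_le_Suc)

lemma (in ring) ideal_pow_one:
  assumes "ideal I R"
  shows "ideal_pow R I 1 = I"
  using ideal_prod_one[OF assms] by simp

lemma (in ring_hom_ring) image_ideal_prod:
  assumes "ideal I R" "ideal J R"
  shows "h ` (I \<cdot> J) = (h ` I) \<cdot>\<^bsub>S\<^esub> (h ` J)"
proof -
  have carr: "I \<subseteq> carrier R" "J \<subseteq> carrier R" "I \<cdot> J \<subseteq> carrier R"
    using assms R.ideal_prod_in_carrier by (auto dest: ideal.Icarr)
  have "h x \<in> (h ` I) \<cdot>\<^bsub>S\<^esub> (h ` J)" if "x \<in> I \<cdot> J" for x
    using that
  proof (induction x rule: ideal_prod.induct)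
    case (prod i j)
    then have "h (i \<otimes> j) = h i \<otimes>\<^bsub>S\<^esub> h j"
      using carr by (intro hom_mult) blast+
    then show ?case
      using prod by (simp add: ideal_prod.prod)
  next
    case (sum s1 s2)
    then have "h (s1 \<oplus> s2) = h s1 \<oplus>\<^bsub>S\<^esub> h s2"
      using carr by (intro hom_add) blast+
    then show ?case
      using sum by (simp add: ideal_prod.sum)
  qed
  moreover have "y \<in> h ` (I \<cdot> J)" if "y \<in> (h ` I) \<cdot>\<^bsub>S\<^esub> (h ` J)" for y
    using that
  proof (induction y rule: ideal_prod.induct)
    case (prod i j)
    then obtain i' j' where "i' \<in> I" "j' \<in> J" "i = h i'" "j = h j'"
      by blast
    moreover have "h (i' \<otimes> j') = h i' \<otimes>\<^bsub>S\<^esub> h j'"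
      using calculation carr by (intro hom_mult) blast+
    ultimately show ?case
      by (metis ideal_prod.prod image_eqI)
  next
    case (sum s1 s2)
    then obtain a b where "a \<in> I \<cdot> J" "b \<in> I \<cdot> J" "s1 = h a" "s2 = h b"
      by blast
    moreover have "h (a \<oplus> b) = h a \<oplus>\<^bsub>S\<^esub> h b"
      using calculation carr by (intro hom_add) blast+
    ultimately show ?case
      by (metis ideal_prod.sum image_eqI)
  qed
  ultimately show ?thesis
    by blast
qed

lemma (in ring_hom_ring) image_ideal_pow:
  assumes "h ` carrier R = carrier S" "ideal I R"
  shows "h ` ideal_pow R I n = ideal_pow S (h ` I) n"
proof (induction n)
  case (Suc n)
  then show ?case
    using image_ideal_prod[OF assms(2) R.ideal_pow_ideal[OF assms(2)]] by simp
qed (simp add: assms(1))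

section \<open>Completeness with respect to a filtration\<close>

lemma (in additive_subgroup) a_minus_closed [intro, simp]:
  "x \<in> H \<Longrightarrow> y \<in> H \<Longrightarrow> x \<ominus>\<^bsub>G\<^esub> y \<in> H"
  by (simp add: a_minus_def)

lemma (in ring) subset_set_add_left:
  assumes "H \<subseteq> carrier R" "\<zero> \<in> K"
  shows "H \<subseteq> H <+> K"
proof
  fix h assume "h \<in> H"
  then have "h = h \<oplus> \<zero>"
    using assms(1) by auto
  then show "h \<in> H <+> K"
    using \<open>h \<in> H\<close> assms(2) unfolding set_add_def' by blast
qed

lemma (in ring) subset_set_add_right:
  assumes "K \<subseteq> carrier R" "\<zero> \<in> H"
  shows "K \<subseteq> H <+> K"
proof
  fix k assume "k \<in> K"
  then have "k = \<zero> \<oplus> k"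
    using assms(1) by auto
  then show "k \<in> H <+> K"
    using \<open>k \<in> K\<close> assms(2) unfolding set_add_def' by blast
qed

lemma set_add_decompose_seq:
  fixes G (structure)
  assumes "\<And>n. u n \<in> A n <+> B"
  obtains a b where "\<And>n. a n \<in> A n" "\<And>n. b n \<in> B" "\<And>n. u n = a n \<oplus> b n"
proof -
  have "\<forall>n. \<exists>ab. fst ab \<in> A n \<and> snd ab \<in> B \<and> u n = fst ab \<oplus> snd ab"
    using assms unfolding set_add_def' by fastforce
  from choice[OF this] obtain ab where
    "\<And>n. fst (ab n) \<in> A n \<and> snd (ab n) \<in> B \<and> u n = fst (ab n) \<oplus> snd (ab n)"
    by blast
  then show thesis
    by (intro that[of "\<lambda>n. fst (ab n)" "\<lambda>n. snd (ab n)"]) auto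
qed

lemma (in ring) a_rcos_subset_iff:
  assumes "ideal H R" "ideal H' R" "H' \<subseteq> H" "x \<in> carrier R" "y \<in> carrier R"
  shows "H' +> y \<subseteq> H +> x \<longleftrightarrow> y \<ominus> x \<in> H"
proof -
  interpret H: ideal H R by fact
  interpret H': ideal H' R by fact
  show ?thesis
  proof
    assume "H' +> y \<subseteq> H +> x"
    then show "y \<ominus> x \<in> H"
      using H'.a_rcos_self H.a_rcos_module_minus assms(4,5) ring_axioms by blast
  next
    assume "y \<ominus> x \<in> H"
    then have "H +> y = H +> x"
      using assms(1,4,5) quotient_eq_iff_same_a_r_cos by blast
    moreover have "H' +> y \<subseteq> H +> y"
      using assms(3) by (auto simp: a_r_coset_def')
    ultimately show "H' +> y \<subseteq> H +> x"
      by simp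
  qed
qed

definition filtration_complete :: "('a, 'b) ring_scheme \<Rightarrow> (nat \<Rightarrow> 'a set) \<Rightarrow> bool" where
  "filtration_complete R F \<longleftrightarrow>
     (\<forall>x. (\<forall>n. x n \<in> carrier R \<and> x (Suc n) \<ominus>\<^bsub>R\<^esub> x n \<in> F n)
       \<longrightarrow> (\<exists>z\<in>carrier R. \<forall>n. z \<ominus>\<^bsub>R\<^esub> x n \<in> F n))"

lemma (in ring) filtration_complete_iff_cosets:
  assumes F: "\<And>n. ideal (F n) R" and anti: "antimono F"
  shows "filtration_complete R F \<longleftrightarrow>
    (\<forall>c. (\<forall>n. c n \<in> a_rcosets (F n)) \<and> (\<forall>n. c (Suc n) \<subseteq> c n)
       \<longrightarrow> (\<exists>z\<in>carrier R. \<forall>n. c n = F n +> z))"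
    (is "_ \<longleftrightarrow> ?cosets")
proof -
  have Suc_subset: "F (Suc n) \<subseteq> F n" for n
    using anti by (simp add: antimono_iff_le_Suc)
  have coset_eq_iff: "F n +> x = F n +> z \<longleftrightarrow> z \<ominus> x \<in> F n"
    if "x \<in> carrier R" "z \<in> carrier R" for x z n
    using quotient_eq_iff_same_a_r_cos[OF F that(2,1)] by auto
  have coset_Suc_subset_iff: "F (Suc n) +> y \<subseteq> F n +> x \<longleftrightarrow> y \<ominus> x \<in> F n"
    if "x \<in> carrier R" "y \<in> carrier R" for x y n
    using a_rcos_subset_iff[OF F F Suc_subset that] .
  show ?thesis
  proof
    assume complete: "filtration_complete R F"
    show ?cosets
    proof (intro allI impI)
      fix c assume c: "(\<forall>n. c n \<in> a_rcosets (F n)) \<and> (\<forall>n. c (Suc n) \<subseteq> c n)"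
      then have "\<forall>n. \<exists>x. x \<in> carrier R \<and> c n = F n +> x"
        unfolding A_RCOSETS_def' by blast
      from choice[OF this] obtain x where x: "\<And>n. x n \<in> carrier R" "\<And>n. c n = F n +> x n"
        by blast
      have "x (Suc n) \<ominus> x n \<in> F n" for n
        using c coset_Suc_subset_iff[OF x(1) x(1)] by (simp add: x(2))
      then obtain z where "z \<in> carrier R" "\<And>n. z \<ominus> x n \<in> F n"
        using complete[unfolded filtration_complete_def, rule_format, of x] x(1) by blast
      then show "\<exists>z\<in>carrier R. \<forall>n. c n = F n +> z"
        using coset_eq_iff[OF x(1)] by (auto simp: x(2))
    qed
  next
    assume cosets: ?cosets
    show "filtration_complete R F"
      unfolding filtration_complete_def
    proof (intro allI impI)
      fix x assume x: "\<forall>n. x n \<in> carrier R \<and> x (Suc n) \<ominus> x n \<in> F n"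
      have "F n +> x n \<in> a_rcosets (F n)" for n
        using x ideal.Icarr[OF F] by (simp add: a_rcosetsI subsetI)
      moreover have "F (Suc n) +> x (Suc n) \<subseteq> F n +> x n" for n
        using x coset_Suc_subset_iff by simp
      ultimately obtain z where "z \<in> carrier R" "\<And>n. F n +> x n = F n +> z"
        using cosets[rule_format, of "\<lambda>n. F n +> x n"] by blast
      then show "\<exists>z\<in>carrier R. \<forall>n. z \<ominus> x n \<in> F n"
        using x coset_eq_iff by blast
    qed
  qed
qed

lemma (in ring) adic_complete_iff_filtration_complete:
  assumes "ideal I R"
  shows "adic_complete R I \<longleftrightarrow> adic_separated R I \<and> filtration_complete R (ideal_pow R I)"
  unfolding adic_complete_def
    filtration_complete_iff_cosets[OF ideal_pow_ideal[OF assms] ideal_pow_antimono[OF assms]]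
  by (rule refl)

lemma (in ring) filtration_cauchy_diff:
  assumes F: "\<And>n. ideal (F n) R" and anti: "antimono F"
    and x: "\<And>n. x n \<in> carrier R" "\<And>n. x (Suc n) \<ominus> x n \<in> F n"
    and "m \<le> n"
  shows "x n \<ominus> x m \<in> F m"
  using \<open>m \<le> n\<close>
proof (induction n rule: dec_induct)
  case base
  then show ?case
    using x(1) additive_subgroup.zero_closed[OF ideal.axioms(1)[OF F]] by (simp add: r_neg minus_eq)
next
  case (step n)
  have "x (Suc n) \<ominus> x m = (x (Suc n) \<ominus> x n) \<oplus> (x n \<ominus> x m)"
    using x(1) by algebra
  moreover have "x (Suc n) \<ominus> x n \<in> F m"
    using x(2) antimonoD[OF anti \<open>m \<le> n\<close>] by blast
  ultimately show ?case
    using step.IH additive_subgroup.a_closed[OF ideal.axioms(1)[OF F]] by simp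
qed

lemma (in ring) set_add_cauchy_correction:
  assumes F: "\<And>n. ideal (F n) R" and K: "ideal K R"
    and x: "\<And>n. x n \<in> carrier R" "\<And>n. x (Suc n) \<ominus> x n \<in> F n <+> K"
  obtains y where "\<And>n. y n \<in> carrier R" "\<And>n. y (Suc n) \<ominus> y n \<in> F n" "\<And>n. y n \<ominus> x n \<in> K"
proof -
  interpret K: ideal K R by (rule K)
  obtain f k where f: "\<And>n. f n \<in> F n" and k: "\<And>n. k n \<in> K"
    and fk: "\<And>n. x (Suc n) \<ominus> x n = f n \<oplus> k n"
    using x(2) by (rule set_add_decompose_seq[where u = "\<lambda>n. x (Suc n) \<ominus> x n" and A = F]) blast
  have f_carr: "f n \<in> carrier R" and k_carr: "k n \<in> carrier R" for n
    using f k ideal.Icarr[OF F] K.Icarr by auto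
  have x_Suc: "x (Suc n) = x n \<oplus> f n \<oplus> k n" for n
  proof -
    have "x (Suc n) = x n \<oplus> (x (Suc n) \<ominus> x n)"
      using x(1) by algebra
    then show ?thesis
      using x(1) f_carr k_carr by (simp add: fk a_assoc)
  qed
  define y where "y = rec_nat (x 0) (\<lambda>n yn. yn \<oplus> f n)"
  have y_0: "y 0 = x 0" and y_Suc: "y (Suc n) = y n \<oplus> f n" for n
    by (simp_all add: y_def)
  have y_carr: "y n \<in> carrier R" for n
    by (induction n) (simp_all add: y_0 y_Suc x(1) f_carr)
  have "y (Suc n) \<ominus> y n = f n" for n
    unfolding y_Suc using y_carr f_carr by algebra
  moreover have "y n \<ominus> x n \<in> K" for n
  proof (induction n)
    case 0
    then show ?case
      using x(1) by (simp add: y_0 r_neg minus_eq)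
  next
    case (Suc n)
    have "y (Suc n) \<ominus> x (Suc n) = (y n \<ominus> x n) \<ominus> k n"
      unfolding y_Suc x_Suc using y_carr x(1) f_carr k_carr by algebra
    then show ?case
      using Suc k by simp
  qed
  ultimately show thesis
    using that[of y] y_carr f by simp
qed

lemma (in ring) filtration_complete_set_add:
  assumes complete: "filtration_complete R F"
    and F: "\<And>n. ideal (F n) R" and K: "ideal K R"
  shows "filtration_complete R (\<lambda>n. F n <+> K)"
  unfolding filtration_complete_def
proof (intro allI impI)
  fix x assume "\<forall>n. x n \<in> carrier R \<and> x (Suc n) \<ominus> x n \<in> F n <+> K"
  then have x_carr: "x n \<in> carrier R" and x_Suc: "x (Suc n) \<ominus> x n \<in> F n <+> K" for n
    by blast+
  obtain y where y_carr: "\<And>n. y n \<in> carrier R" and y_Suc: "\<And>n. y (Suc n) \<ominus> y n \<in> F n"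
    and y_minus_x: "\<And>n. y n \<ominus> x n \<in> K"
    by (rule set_add_cauchy_correction[where F = F and x = x, OF F K x_carr x_Suc]) blast
  obtain z where z: "z \<in> carrier R" "\<And>n. z \<ominus> y n \<in> F n"
    using complete[unfolded filtration_complete_def, rule_format, of y] y_carr y_Suc by blast
  have "z \<ominus> x n \<in> F n <+> K" for n
  proof -
    have "z \<ominus> x n = (z \<ominus> y n) \<oplus> (y n \<ominus> x n)"
      using z(1) y_carr x_carr by algebra
    then show ?thesis
      using z(2) y_minus_x unfolding set_add_def' by blast
  qed
  then show "\<exists>z\<in>carrier R. \<forall>n. z \<ominus> x n \<in> F n <+> K"
    using z(1) by blast
qed

lemma (in ring) set_add_component_eventually_const:
  assumes F: "\<And>n. ideal (F n) R" and anti: "antimono F"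
    and K: "ideal K R" and disjoint: "F 1 \<inter> K = {\<zero>}"
    and x: "\<And>n. x n \<in> carrier R" "\<And>n. x (Suc n) \<ominus> x n \<in> F n"
    and y: "y \<in> carrier R"
    and decomp: "\<And>n. j n \<in> F n" "\<And>n. s n \<in> K" "\<And>n. y \<ominus> x n = j n \<oplus> s n"
    and "1 \<le> n"
  shows "s n = s 1"
proof -
  interpret K: ideal K R by (rule K)
  interpret F1: ideal "F 1" R by (rule F)
  have j_carr: "j m \<in> carrier R" and s_carr: "s m \<in> carrier R" for m
    using decomp(1,2) ideal.Icarr[OF F] K.Icarr by auto
  have s_eq: "s m = y \<ominus> x m \<ominus> j m" for m
  proof -
    have "s m = j m \<oplus> s m \<ominus> j m"
      using j_carr s_carr by algebra
    then show ?thesis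
      by (simp add: decomp(3))
  qed
  have diff_eq: "s n \<ominus> s 1 = (j 1 \<ominus> j n) \<ominus> (x n \<ominus> x 1)"
    unfolding s_eq using y x(1) j_carr by algebra
  have x_diff: "x n \<ominus> x 1 \<in> F 1"
    using filtration_cauchy_diff[where x = x, OF F anti x \<open>1 \<le> n\<close>] .
  have j_n: "j n \<in> F 1"
    using decomp(1) antimonoD[OF anti \<open>1 \<le> n\<close>] by blast
  have "s n \<ominus> s 1 \<in> F 1"
    unfolding diff_eq by (rule F1.a_minus_closed[OF F1.a_minus_closed[OF decomp(1) j_n] x_diff])
  moreover have "s n \<ominus> s 1 \<in> K"
    by (rule K.a_minus_closed[OF decomp(2) decomp(2)])
  ultimately have "s n \<ominus> s 1 = \<zero>"
    using disjoint by blast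
  then show ?thesis
    using s_carr by simp
qed

lemma (in ring) filtration_complete_of_set_add:
  assumes complete: "filtration_complete R (\<lambda>n. F n <+> K)"
    and F: "\<And>n. ideal (F n) R" and anti: "antimono F"
    and K: "ideal K R" and disjoint: "F 1 \<inter> K = {\<zero>}"
  shows "filtration_complete R F"
  unfolding filtration_complete_def
proof (intro allI impI)
  interpret K: ideal K R by (rule K)
  fix x assume x: "\<forall>n. x n \<in> carrier R \<and> x (Suc n) \<ominus> x n \<in> F n"
  then have x_carr: "x n \<in> carrier R" and x_Suc: "x (Suc n) \<ominus> x n \<in> F n" for n
    by blast+
  have "F n \<subseteq> F n <+> K" for n
    using subset_set_add_left[OF _ K.zero_closed] ideal.Icarr[OF F] by blast
  then have "\<forall>n. x n \<in> carrier R \<and> x (Suc n) \<ominus> x n \<in> F n <+> K"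
    using x by blast
  then obtain y where y: "y \<in> carrier R" "\<And>n. y \<ominus> x n \<in> F n <+> K"
    using complete[unfolded filtration_complete_def, rule_format] by blast
  from y(2) obtain j s where decomp: "\<And>n. j n \<in> F n" "\<And>n. s n \<in> K"
    "\<And>n. y \<ominus> x n = j n \<oplus> s n"
    by (rule set_add_decompose_seq[where u = "\<lambda>n. y \<ominus> x n" and A = F]) blast
  have j_carr: "j n \<in> carrier R" and s_carr: "s n \<in> carrier R" for n
    using decomp(1,2) ideal.Icarr[OF F] K.Icarr by auto
  have limit_Suc: "y \<ominus> s 1 \<ominus> x n \<in> F n" if "1 \<le> n" for n
  proof -
    have "y \<ominus> s 1 \<ominus> x n = (y \<ominus> x n) \<ominus> s 1"
      using y x_carr s_carr by algebra
    also have "\<dots> = j n \<oplus> s 1 \<ominus> s 1"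
      using set_add_component_eventually_const[where x = x and s = s,
          OF F anti K disjoint x_carr x_Suc y(1) decomp that]
      by (simp add: decomp(3))
    also have "\<dots> = j n"
      using j_carr s_carr by algebra
    finally show ?thesis
      using decomp(1) by simp
  qed
  have limit_0: "y \<ominus> s 1 \<ominus> x 0 \<in> F 0"
  proof -
    have "y \<ominus> s 1 \<ominus> x 0 = (y \<ominus> s 1 \<ominus> x 1) \<oplus> (x 1 \<ominus> x 0)"
      using y x_carr s_carr by algebra
    moreover have "y \<ominus> s 1 \<ominus> x 1 \<in> F 0"
      using limit_Suc[of 1] antimonoD[OF anti, of 0 1] by auto
    ultimately show ?thesis
      using x_Suc[of 0] additive_subgroup.a_closed[OF ideal.axioms(1)[OF F]] by simp
  qed
  have "y \<ominus> s 1 \<ominus> x n \<in> F n" for n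
    using limit_0 limit_Suc by (cases n) auto
  then show "\<exists>z\<in>carrier R. \<forall>n. z \<ominus> x n \<in> F n"
    using y s_carr by blast
qed

section \<open>Filtrations of a quotient ring\<close>

lemma (in ideal) carrier_quot: "carrier (R Quot I) = (+>) I ` carrier R"
  unfolding FactRing_def A_RCOSETS_def' by auto

lemma (in ideal) rcos_minus:
  assumes "x \<in> carrier R" "y \<in> carrier R"
  shows "(I +> x) \<ominus>\<^bsub>R Quot I\<^esub> (I +> y) = I +> (x \<ominus> y)"
proof -
  interpret \<pi>: ring_hom_ring R "R Quot I" "(+>) I"
    by (rule rcos_ring_hom_ring)
  show ?thesis
    using assms by (simp add: a_minus_def)
qed

lemma (in ideal) rcos_eq_self_iff:
  assumes "x \<in> carrier R"
  shows "I +> x = I \<longleftrightarrow> x \<in> I"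
  using rcos_const_imp_mem[OF assms] a_rcos_zero[OF is_ideal] by blast

lemma (in ideal) rcos_mem_image_iff:
  assumes "H \<subseteq> carrier R" "x \<in> carrier R"
  shows "I +> x \<in> (+>) I ` H \<longleftrightarrow> x \<in> H <+> I"
proof -
  have coset_eq_iff: "I +> x = I +> h \<longleftrightarrow> (\<exists>k\<in>I. x = h \<oplus> k)" if "h \<in> H" for h
  proof -
    have h: "h \<in> carrier R"
      using assms(1) that by blast
    have "I +> x = I +> h \<longleftrightarrow> x \<ominus> h \<in> I"
      using quotient_eq_iff_same_a_r_cos[OF is_ideal assms(2) h] by simp
    also have "\<dots> \<longleftrightarrow> (\<exists>k\<in>I. x = h \<oplus> k)"
    proof
      assume "x \<ominus> h \<in> I"
      moreover have "x = h \<oplus> (x \<ominus> h)"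
        using assms(2) h by algebra
      ultimately show "\<exists>k\<in>I. x = h \<oplus> k" ..
    next
      assume "\<exists>k\<in>I. x = h \<oplus> k"
      then obtain k where "k \<in> I" "x = h \<oplus> k" ..
      moreover have "h \<oplus> k \<ominus> h = k"
        using h Icarr[OF \<open>k \<in> I\<close>] by algebra
      ultimately show "x \<ominus> h \<in> I"
        by simp
    qed
    finally show ?thesis .
  qed
  have "I +> x \<in> (+>) I ` H \<longleftrightarrow> (\<exists>h\<in>H. I +> x = I +> h)"
    by (rule image_iff)
  also have "\<dots> \<longleftrightarrow> (\<exists>h\<in>H. \<exists>k\<in>I. x = h \<oplus> k)"
    using coset_eq_iff by (rule bex_cong[OF refl])
  also have "\<dots> \<longleftrightarrow> x \<in> H <+> I"
    unfolding set_add_def' by simp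
  finally show ?thesis .
qed

lemma (in ideal) quot_filtration_complete_iff:
  assumes "\<And>n. F n \<subseteq> carrier R"
  shows "filtration_complete (R Quot I) (\<lambda>n. (+>) I ` F n) \<longleftrightarrow> filtration_complete R (\<lambda>n. F n <+> I)"
    (is "?quot \<longleftrightarrow> ?ring")
proof -
  have diff_mem_iff: "(I +> x) \<ominus>\<^bsub>R Quot I\<^esub> (I +> y) \<in> (+>) I ` F n \<longleftrightarrow> x \<ominus> y \<in> F n <+> I"
    if "x \<in> carrier R" "y \<in> carrier R" for x y n
    using that assms by (simp add: rcos_minus rcos_mem_image_iff)
  show ?thesis
  proof
    assume ?quot
    show ?ring
      unfolding filtration_complete_def
    proof (intro allI impI)
      fix x assume x: "\<forall>n. x n \<in> carrier R \<and> x (Suc n) \<ominus> x n \<in> F n <+> I"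
      then have "\<forall>n. I +> x n \<in> carrier (R Quot I) \<and>
          (I +> x (Suc n)) \<ominus>\<^bsub>R Quot I\<^esub> (I +> x n) \<in> (+>) I ` F n"
        by (simp add: carrier_quot diff_mem_iff)
      then obtain w where "w \<in> carrier (R Quot I)"
        and w: "\<And>n. w \<ominus>\<^bsub>R Quot I\<^esub> (I +> x n) \<in> (+>) I ` F n"
        using \<open>?quot\<close>[unfolded filtration_complete_def, rule_format, of "\<lambda>n. I +> x n"] by blast
      then obtain z where z: "z \<in> carrier R" "w = I +> z"
        using carrier_quot by blast
      then have "z \<ominus> x n \<in> F n <+> I" for n
        using w[of n] diff_mem_iff[OF z(1)] x by simp
      then show "\<exists>z\<in>carrier R. \<forall>n. z \<ominus> x n \<in> F n <+> I"
        using z(1) by blast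
    qed
  next
    assume ?ring
    show ?quot
      unfolding filtration_complete_def
    proof (intro allI impI)
      fix c assume c: "\<forall>n. c n \<in> carrier (R Quot I) \<and> c (Suc n) \<ominus>\<^bsub>R Quot I\<^esub> c n \<in> (+>) I ` F n"
      then have "\<forall>n. \<exists>x. x \<in> carrier R \<and> c n = I +> x"
        using carrier_quot by blast
      from choice[OF this] obtain x where x: "\<And>n. x n \<in> carrier R" "\<And>n. c n = I +> x n"
        by blast
      have "x (Suc n) \<ominus> x n \<in> F n <+> I" for n
        using c diff_mem_iff[OF x(1) x(1)] by (simp add: x(2))
      then obtain z where z: "z \<in> carrier R" "\<And>n. z \<ominus> x n \<in> F n <+> I"
        using \<open>?ring\<close>[unfolded filtration_complete_def, rule_format, of x] x(1) by blast
      then have "(I +> z) \<ominus>\<^bsub>R Quot I\<^esub> c n \<in> (+>) I ` F n" for n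
        using diff_mem_iff[OF z(1) x(1)] by (simp add: x(2))
      moreover have "I +> z \<in> carrier (R Quot I)"
        unfolding carrier_quot using z(1) by (rule imageI)
      ultimately show "\<exists>w\<in>carrier (R Quot I). \<forall>n. w \<ominus>\<^bsub>R Quot I\<^esub> c n \<in> (+>) I ` F n"
        by blast
    qed
  qed
qed

lemma (in ideal) quot_ideal_pow:
  assumes "ideal J R"
  shows "ideal_pow (R Quot I) (quot_ideal R I J) = (\<lambda>n. (+>) I ` ideal_pow R J n)"
proof -
  interpret \<pi>: ring_hom_ring R "R Quot I" "(+>) I"
    by (rule rcos_ring_hom_ring)
  have "quot_ideal R I J = (+>) I ` J"
    by (simp add: quot_ideal_def)
  then show ?thesis
    using \<pi>.image_ideal_pow[OF carrier_quot[symmetric] assms] by auto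
qed

lemma (in ideal) Inter_rcos_image:
  fixes F :: "nat \<Rightarrow> 'a set"
  assumes F: "\<And>n. F n \<subseteq> carrier R"
  shows "(\<Inter>n. (+>) I ` F n) = (+>) I ` (\<Inter>n. F n <+> I)"
proof (intro equalityI subsetI)
  fix c assume c: "c \<in> (\<Inter>n. (+>) I ` F n)"
  then have "c \<in> (+>) I ` F 0"
    by (rule INT_D) (rule UNIV_I)
  then obtain x where x: "c = I +> x" "x \<in> F 0"
    by (rule imageE)
  then have x_carr: "x \<in> carrier R"
    using F by blast
  then have "x \<in> (\<Inter>n. F n <+> I)"
    using c rcos_mem_image_iff[OF F x_carr] by (simp add: x(1))
  then show "c \<in> (+>) I ` (\<Inter>n. F n <+> I)"
    using x(1) by (rule rev_image_eqI)
next
  fix c assume "c \<in> (+>) I ` (\<Inter>n. F n <+> I)"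
  then obtain x where x: "c = I +> x" "x \<in> (\<Inter>n. F n <+> I)"
    by (rule imageE)
  then have "x \<in> carrier R"
    using set_add_closed[OF F a_subset, of 0] by blast
  then show "c \<in> (\<Inter>n. (+>) I ` F n)"
    using x rcos_mem_image_iff[OF F] by simp
qed

lemma (in ideal) rcos_image_eq_self_iff:
  assumes "I \<subseteq> S" "S \<subseteq> carrier R"
  shows "(+>) I ` S = {I} \<longleftrightarrow> S = I"
proof
  assume image: "(+>) I ` S = {I}"
  have "S \<subseteq> I"
  proof
    fix x assume "x \<in> S"
    then have "I +> x = I"
      using image by blast
    then show "x \<in> I"
      using rcos_eq_self_iff \<open>x \<in> S\<close> assms(2) by blast
  qed
  then show "S = I"
    using assms(1) by (rule subset_antisym)
next
  assume "S = I"
  have "(+>) I ` I = (\<lambda>_. I) ` I"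
    using a_rcos_zero[OF is_ideal] by (rule image_cong[OF refl])
  moreover have "I \<noteq> {}"
    using additive_subgroup.zero_closed[OF is_additive_subgroup] by blast
  ultimately show "(+>) I ` S = {I}"
    using \<open>S = I\<close> by (simp add: image_constant_conv)
qed

lemma (in ideal) quot_adic_separated_iff:
  assumes "ideal J R"
  shows "adic_separated (R Quot I) (quot_ideal R I J) \<longleftrightarrow> (\<Inter>n. ideal_pow R J n <+> I) = I"
proof -
  note J_carr = ideal_pow_subset_carrier[OF assms] and J_zero = ideal_pow_zero_closed[OF assms]
  have "I \<subseteq> (\<Inter>n. ideal_pow R J n <+> I)"
    using subset_set_add_right[OF a_subset J_zero] by blast
  moreover have "(\<Inter>n. ideal_pow R J n <+> I) \<subseteq> carrier R"
    using set_add_closed[OF J_carr a_subset, of 0] by blast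
  ultimately show ?thesis
    unfolding adic_separated_def quot_ideal_pow[OF assms] Inter_rcos_image[OF J_carr]
    using rcos_image_eq_self_iff by (simp add: FactRing_def)
qed

lemma (in ideal) quot_adic_complete_iff:
  assumes "ideal J R"
  shows "adic_complete (R Quot I) (quot_ideal R I J) \<longleftrightarrow>
    (\<Inter>n. ideal_pow R J n <+> I) = I \<and> filtration_complete R (\<lambda>n. ideal_pow R J n <+> I)"
proof -
  have "ideal (quot_ideal R I J) (R Quot I)"
    using ring_ideal_imp_quot_ideal[OF is_ideal assms] by (simp add: quot_ideal_def)
  then show ?thesis
    using ring.adic_complete_iff_filtration_complete[OF quotient_is_ring]
      quot_adic_separated_iff[OF assms] quot_ideal_pow[OF assms]
      quot_filtration_complete_iff[OF ideal_pow_subset_carrier[OF assms]]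
    by simp
qed

section \<open>Torsion\<close>

lemma (in ring) nat_pow_mult_eq_zero_mono:
  fixes n m :: nat
  assumes "a \<in> carrier R" "x \<in> carrier R" "a [^] n \<otimes> x = \<zero>" "n \<le> m"
  shows "a [^] m \<otimes> x = \<zero>"
proof -
  have "a [^] m = a [^] (m - n) \<otimes> a [^] n"
    using assms(1,4) by (simp add: nat_pow_mult)
  then show ?thesis
    using assms(1-3) by (simp add: m_assoc)
qed

lemma (in cring) tor_ideal:
  assumes I: "ideal I R"
  shows "ideal (tor R I) R"
proof -
  have Icarr: "a \<in> carrier R" if "a \<in> I" for a
    using ideal.Icarr[OF I that] .
  have add: "x \<oplus> y \<in> tor R I" if "x \<in> tor R I" "y \<in> tor R I" for x y
  proof -
    have xy: "x \<in> carrier R" "y \<in> carrier R"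
      using that by (auto simp: tor_def)
    have "\<exists>k::nat>0. a [^] k \<otimes> (x \<oplus> y) = \<zero>" if a: "a \<in> I" for a
    proof -
      obtain n :: nat where "n > 0" "a [^] n \<otimes> x = \<zero>"
        using \<open>x \<in> tor R I\<close> a by (auto simp: tor_def)
      moreover obtain m :: nat where "a [^] m \<otimes> y = \<zero>"
        using \<open>y \<in> tor R I\<close> a by (auto simp: tor_def)
      ultimately have "a [^] max n m \<otimes> x = \<zero>" "a [^] max n m \<otimes> y = \<zero>"
        using nat_pow_mult_eq_zero_mono[OF Icarr[OF a]] xy by auto
      then show ?thesis
        using \<open>n > 0\<close> Icarr[OF a] xy by (intro exI[of _ "max n m"]) (simp add: r_distr)
    qed
    then show ?thesis
      using xy by (simp add: tor_def)
  qed
  have neg: "\<ominus> x \<in> tor R I" if "x \<in> tor R I" for x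
    using that Icarr by (auto simp: tor_def r_minus)
  have mult: "r \<otimes> x \<in> tor R I" if "x \<in> tor R I" "r \<in> carrier R" for x r
    using that Icarr by (fastforce simp: tor_def m_lcomm)
  have zero: "\<zero> \<in> tor R I"
    using Icarr by (auto simp: tor_def intro: exI[of _ 1])
  show ?thesis
  proof (rule idealI[OF ring_axioms add.subgroupI])
    show "tor R I \<subseteq> carrier R"
      by (auto simp: tor_def)
  qed (use zero add neg mult in \<open>auto simp: m_comm tor_def\<close>)
qed

lemma (in cring) annihilated_mem_tor:
  assumes "x \<in> carrier R" "\<And>a. a \<in> I \<Longrightarrow> a \<otimes> x = \<zero>" "I \<subseteq> carrier R"
  shows "x \<in> tor R I"
  using assms unfolding tor_def by (force intro: exI[of _ "1::nat"])

lemma (in ring) disjoint_ideals_mult_zero: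
  assumes "ideal I R" "ideal K R" "K \<inter> I = {\<zero>}" "a \<in> I" "t \<in> K"
  shows "a \<otimes> t = \<zero>"
proof -
  have "a \<otimes> t \<in> K"
    using ideal.I_l_closed[OF assms(2,5) ideal.Icarr[OF assms(1,4)]] .
  moreover have "a \<otimes> t \<in> I"
    using ideal.I_r_closed[OF assms(1,4) ideal.Icarr[OF assms(2,5)]] .
  ultimately show ?thesis
    using assms(3) by blast
qed

lemma (in cring) Inter_ideal_pow_set_add_tor_subset:
  assumes I: "ideal I R" and disjoint: "tor R I \<inter> I = {\<zero>}" and sep: "adic_separated R I"
  shows "(\<Inter>n. ideal_pow R I n <+> tor R I) \<subseteq> tor R I"
proof
  interpret T: ideal "tor R I" R by (rule tor_ideal[OF I])
  fix y assume y: "y \<in> (\<Inter>n. ideal_pow R I n <+> tor R I)"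
  show "y \<in> tor R I"
  proof (rule annihilated_mem_tor)
    show "y \<in> carrier R"
      using y set_add_closed[OF ideal_pow_subset_carrier[OF I] T.a_subset, of 0] by blast
    show "I \<subseteq> carrier R"
      using ideal.Icarr[OF I] by blast
    fix a assume a: "a \<in> I"
    have "a \<otimes> y \<in> ideal_pow R I n" for n
    proof -
      obtain j t where j: "j \<in> ideal_pow R I n" and t: "t \<in> tor R I" and "y = j \<oplus> t"
        using y unfolding set_add_def' by blast
      moreover have "a \<otimes> t = \<zero>"
        using disjoint_ideals_mult_zero[OF I T.is_ideal disjoint a t] .
      moreover have "a \<in> carrier R" "j \<in> carrier R" "t \<in> carrier R"
        using ideal.Icarr[OF I a] ideal_pow_subset_carrier[OF I] j t T.Icarr by auto
      ultimately have "a \<otimes> y = a \<otimes> j"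
        by (simp add: r_distr)
      then show ?thesis
        using ideal.I_l_closed[OF ideal_pow_ideal[OF I] j \<open>a \<in> carrier R\<close>] by simp
    qed
    then show "a \<otimes> y = \<zero>"
      using sep unfolding adic_separated_def by blast
  qed
qed

lemma (in cring) adic_separated_iff_modulo_tor:
  assumes I: "ideal I R" and disjoint: "tor R I \<inter> I = {\<zero>}"
  shows "adic_separated R I \<longleftrightarrow> (\<Inter>n. ideal_pow R I n <+> tor R I) = tor R I"
proof -
  interpret T: ideal "tor R I" R by (rule tor_ideal[OF I])
  note J_zero = ideal_pow_zero_closed[OF I]
  show ?thesis
  proof
    assume "adic_separated R I"
    moreover have "tor R I \<subseteq> (\<Inter>n. ideal_pow R I n <+> tor R I)"
      using subset_set_add_right[OF T.a_subset J_zero] by blast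
    ultimately show "(\<Inter>n. ideal_pow R I n <+> tor R I) = tor R I"
      using Inter_ideal_pow_set_add_tor_subset[OF I disjoint] by blast
  next
    assume sep_mod_tor: "(\<Inter>n. ideal_pow R I n <+> tor R I) = tor R I"
    have "y = \<zero>" if y: "y \<in> (\<Inter>n. ideal_pow R I n)" for y
    proof -
      have "y \<in> (\<Inter>n. ideal_pow R I n <+> tor R I)"
        using y subset_set_add_left[OF ideal_pow_subset_carrier[OF I] T.zero_closed] by blast
      moreover have "y \<in> I"
        using y ideal_pow_one[OF I] by blast
      ultimately show ?thesis
        using sep_mod_tor disjoint by blast
    qed
    then show "adic_separated R I"
      unfolding adic_separated_def using J_zero by blast
  qed
qed

theorem proposition3p10:
  fixes A :: "('a, 'b) ring_scheme" and I :: "'a set"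
  assumes "cring A" and "ideal I A"
    and "tor A I \<inter> I = {\<zero>\<^bsub>A\<^esub>}"
  shows "(adic_separated A I \<longleftrightarrow>
           adic_separated (A Quot (tor A I)) (quot_ideal A (tor A I) I))
       \<and> (adic_complete A I \<longleftrightarrow>
           adic_complete (A Quot (tor A I)) (quot_ideal A (tor A I) I))"
proof -
  interpret cring A by (rule assms(1))
  interpret T: ideal "tor A I" A by (rule tor_ideal[OF assms(2)])
  have J: "ideal (ideal_pow A I n) A" for n
    by (rule ideal_pow_ideal[OF assms(2)])
  have disjoint: "ideal_pow A I 1 \<inter> tor A I = {\<zero>\<^bsub>A\<^esub>}"
    using assms(3) ideal_pow_one[OF assms(2)] by blast
  have "filtration_complete A (ideal_pow A I) \<longleftrightarrow>
      filtration_complete A (\<lambda>n. ideal_pow A I n <+>\<^bsub>A\<^esub> tor A I)"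
    using filtration_complete_set_add[where F = "ideal_pow A I", OF _ J T.is_ideal]
      filtration_complete_of_set_add[OF _ J ideal_pow_antimono[OF assms(2)] T.is_ideal disjoint]
    by blast
  then show ?thesis
    using adic_separated_iff_modulo_tor[OF assms(2,3)] T.quot_adic_separated_iff[OF assms(2)]
      adic_complete_iff_filtration_complete[OF assms(2)] T.quot_adic_complete_iff[OF assms(2)]
    by simp
qed

end
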